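(* Let $(x_i(t),v_i(t))_{i=1}^N$ follow the sticky particle Cucker–Smale dynamics, and let $\psi_i(t):=v_i(t)+\sum_{j=1}^N m_j\,\omega(x_i(t)-x_j(t))$. Fix $i\in\{1,\dots,N\}$ and a time $t>0$, and set $i_*(t):=\min J_i(t)$, $i^*(t):=\max J_i(t)$. Then for every $k\in J_i(t)$, $$\frac{\sum_{j=i_*(t)}^{k}m_j\psi_j(t-)}{\sum_{j=i_*(t)}^{k}m_j}\;\ge\;\frac{\sum_{j\in J_i(t)}m_j\psi_j(t-)}{\sum_{j\in J_i(t)}m_j}=\psi_i(t+)\;\ge\;\frac{\sum_{j=k}^{i^*(t)}m_j\psi_j(t-)}{\sum_{j=k}^{i^*(t)}m_j}.$$
   Context: Standing assumption (H): $\omega:\mathbb{R}\to[0,+\infty)$, $\omega\in W^{1,1}(\mathbb{R})\cap W^{1,\infty}(\mathbb{R})$, $\int_{\mathbb{R}}\omega\,dx=1$, and $\phi:=\omega'\in L^1(\mathbb{R})\cap L^\infty(\mathbb{R})$. Sticky particle Cucker–Smale dynamics: given $N\in\mathbb{N}$, masses $m_1,\dots,m_N>0$ with $\sum_i m_i=1$, initial positions $x_1^0\le\dots\le x_N^0$ and initial velocities $v_1^0,\dots,v_N^0$, the trajectories $(x_i(t),v_i(t))$, $t\ge0$, have continuous positions with $x_1(t)\le\dots\le x_N(t)$. Let $J_i(t):=\{j\in\{1,\dots,N\}: x_j(t)=x_i(t)\}$; particles that meet stick together, i.e. $J_i(t)\subseteq J_i(s)$ for $0\le t\le s$. A collision time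 is a time at which two or more particles that were apart come to have the same position for the first time. At times $t$ that are not collision times, $\dot x_i=v_i$ and $\dot v_i=\sum_{j=1}^N m_j\phi(x_i-x_j)(v_j-v_i)$. At a collision time $t$, the particles in $J_i(t)$ continue with the common velocity $v_i(t+)=\frac{\sum_{j\in J_i(t)}m_jv_j(t-)}{\sum_{j\in J_i(t)}m_j}$. *)

theory Defs
  imports "HOL-Analysis.Analysis"
begin

text \<open>W^{1,1} and W^{1,infinity} are rendered as: omega and phi Lebesgue integrable,
  omega bounded, phi essentially bounded, and phi is the (weak = a.e.) derivative
  of omega in the absolutely continuous sense.\<close>
definition hyp_H :: "(real \<Rightarrow> real) \<Rightarrow> (real \<Rightarrow> real) \<Rightarrow> bool" where
  "hyp_H \<omega> \<phi> \<longleftrightarrow>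
     (\<forall>x. 0 \<le> \<omega> x) \<and>
     integrable lborel \<omega> \<and> (\<exists>C. \<forall>x. \<bar>\<omega> x\<bar> \<le> C) \<and>
     integrable lborel \<phi> \<and> (\<exists>C. AE x in lborel. \<bar>\<phi> x\<bar> \<le> C) \<and>
     (\<forall>a b. a \<le> b \<longrightarrow> \<omega> b - \<omega> a = set_lebesgue_integral lborel {a..b} \<phi>) \<and>
     integral\<^sup>L lborel \<omega> = 1"

definition cluster :: "nat \<Rightarrow> (nat \<Rightarrow> real \<Rightarrow> real) \<Rightarrow> nat \<Rightarrow> real \<Rightarrow> nat set" where
  "cluster N x i t = {j \<in> {1..N}. x j t = x i t}"

definition collision_time :: "nat \<Rightarrow> (nat \<Rightarrow> real \<Rightarrow> real) \<Rightarrow> real \<Rightarrow> bool" where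
  "collision_time N x t \<longleftrightarrow> 0 < t \<and>
     (\<exists>i\<in>{1..N}. \<exists>j\<in>{1..N}. x i t = x j t \<and> (\<forall>s\<in>{0..<t}. x i s \<noteq> x j s))"

definition cs_force :: "nat \<Rightarrow> (nat \<Rightarrow> real) \<Rightarrow> (real \<Rightarrow> real) \<Rightarrow>
    (nat \<Rightarrow> real \<Rightarrow> real) \<Rightarrow> (nat \<Rightarrow> real \<Rightarrow> real) \<Rightarrow> nat \<Rightarrow> real \<Rightarrow> real" where
  "cs_force N m \<phi> x v i t = (\<Sum>j=1..N. m j * \<phi> (x i t - x j t) * (v j t - v i t))"

definition sticky_CS :: "nat \<Rightarrow> (nat \<Rightarrow> real) \<Rightarrow> (real \<Rightarrow> real) \<Rightarrow>
    (nat \<Rightarrow> real \<Rightarrow> real) \<Rightarrow> (nat \<Rightarrow> real \<Rightarrow> real) \<Rightarrow> bool" where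
  "sticky_CS N m \<phi> x v \<longleftrightarrow>
     (\<forall>i\<in>{1..N}. 0 < m i) \<and> (\<Sum>i=1..N. m i) = 1 \<and>
     (\<forall>i\<in>{1..N}. continuous_on {0..} (x i)) \<and>
     (\<forall>t\<ge>0. \<forall>i\<in>{1..N}. \<forall>j\<in>{1..N}. i \<le> j \<longrightarrow> x i t \<le> x j t) \<and>
     (\<forall>i\<in>{1..N}. \<forall>t s. 0 \<le> t \<longrightarrow> t \<le> s \<longrightarrow> cluster N x i t \<subseteq> cluster N x i s) \<and>
     (\<forall>t\<ge>0. \<not> collision_time N x t \<longrightarrow>
        (\<forall>i\<in>{1..N}. (x i has_real_derivative v i t) (at t within {0..}) \<and>
                     (v i has_real_derivative cs_force N m \<phi> x v i t) (at t within {0..}))) \<and>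
     (\<forall>t. collision_time N x t \<longrightarrow>
        (\<forall>i\<in>{1..N}. (\<exists>l. (v i \<longlongrightarrow> l) (at_left t)) \<and>
           (v i \<longlongrightarrow> (\<Sum>j\<in>cluster N x i t. m j * Lim (at_left t) (v j))
                          / (\<Sum>j\<in>cluster N x i t. m j)) (at_right t)))"

definition psi :: "nat \<Rightarrow> (nat \<Rightarrow> real) \<Rightarrow> (real \<Rightarrow> real) \<Rightarrow>
    (nat \<Rightarrow> real \<Rightarrow> real) \<Rightarrow> (nat \<Rightarrow> real \<Rightarrow> real) \<Rightarrow> nat \<Rightarrow> real \<Rightarrow> real" where
  "psi N m \<omega> x v i t = v i t + (\<Sum>j=1..N. m j * \<omega> (x i t - x j t))"

end

theory Submission
  imports Defs
begin

text \<open>Away from the finitely many collision times every \<open>x\<^sub>j\<close> is differentiable with derivative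
  \<open>v\<^sub>j\<close>.  If \<open>j \<le> j'\<close> meet at time \<open>t\<close>, then \<open>x\<^sub>j\<^sub>' - x\<^sub>j \<ge> 0\<close> vanishes at \<open>t\<close>, so it cannot be
  increasing just before \<open>t\<close>, which forces \<open>v\<^sub>j\<^sub>'(t-) \<le> v\<^sub>j(t-)\<close>.  The interaction part of
  \<open>\<psi>\<close> is continuous and takes one common value on the cluster \<open>J = {i\<^sub>*..i\<^sup>*}\<close>; hence
  \<open>j \<mapsto> \<psi>\<^sub>j(t-)\<close> is nonincreasing on \<open>J\<close>, and \<open>\<psi>\<^sub>i(t+)\<close> is the mass-weighted mean of the
  \<open>\<psi>\<^sub>j(t-)\<close> over \<open>J\<close> (by the sticky rule at a collision, and otherwise because all
  velocities in \<open>J\<close> already agree).  The claim is then the fact that prefix means of a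
  nonincreasing sequence dominate its mean, which dominates its suffix means.\<close>

definition weighted_mean :: "('a \<Rightarrow> real) \<Rightarrow> ('a \<Rightarrow> real) \<Rightarrow> 'a set \<Rightarrow> real" where
  "weighted_mean m f A = (\<Sum>j\<in>A. m j * f j) / (\<Sum>j\<in>A. m j)"

lemma weighted_mean_cong:
  "(\<And>j. j \<in> A \<Longrightarrow> f j = g j) \<Longrightarrow> weighted_mean m f A = weighted_mean m g A"
  unfolding weighted_mean_def by (simp cong: sum.cong)

lemma weighted_mean_add_const:
  assumes "(\<Sum>j\<in>A. m j) \<noteq> 0"
  shows "weighted_mean m (\<lambda>j. f j + c) A = weighted_mean m f A + c"
  using assms
  by (simp add: weighted_mean_def distrib_left sum.distrib sum_distrib_right[symmetric] add_divide_distrib)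

lemma weighted_mean_const:
  "(\<Sum>j\<in>A. m j) \<noteq> 0 \<Longrightarrow> weighted_mean m (\<lambda>_. c) A = c"
  using weighted_mean_add_const[of m A "\<lambda>_. 0" c] by (simp add: weighted_mean_def)

lemma weighted_mean_uminus: "weighted_mean m (\<lambda>j. - f j) A = - weighted_mean m f A"
  by (simp add: weighted_mean_def sum_negf)

lemma mediant_le_left:
  fixes X Y a b :: real
  assumes "0 < a" "0 \<le> b" "Y * a \<le> X * b"
  shows "(X + Y) / (a + b) \<le> X / a"
proof -
  have "(X + Y) * a \<le> X * (a + b)" using assms(3) by (simp add: algebra_simps)
  then show ?thesis using assms by (simp add: divide_simps)
qed

lemma weighted_mean_union_le:
  assumes fin: "finite A" "finite B" and disj: "A \<inter> B = {}"
    and m: "\<And>j. j \<in> A \<union> B \<Longrightarrow> 0 \<le> m j" and mA: "0 < (\<Sum>j\<in>A. m j)"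
    and fA: "\<And>j. j \<in> A \<Longrightarrow> c \<le> f j" and fB: "\<And>j. j \<in> B \<Longrightarrow> f j \<le> c"
  shows "weighted_mean m f (A \<union> B) \<le> weighted_mean m f A"
proof -
  define X Y a b where "X = (\<Sum>j\<in>A. m j * f j)" and "Y = (\<Sum>j\<in>B. m j * f j)"
    and "a = (\<Sum>j\<in>A. m j)" and "b = (\<Sum>j\<in>B. m j)"
  have "0 < a" using mA by (simp add: a_def)
  have "0 \<le> b" unfolding b_def using m by (intro sum_nonneg) auto
  have "c * a \<le> X"
    unfolding X_def a_def sum_distrib_left using m fA
    by (intro sum_mono) (simp add: mult_left_mono mult.commute[of c])
  have "Y \<le> c * b"
    unfolding Y_def b_def sum_distrib_left using m fB
    by (intro sum_mono) (simp add: mult_left_mono mult.commute[of c])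
  have "Y * a \<le> c * b * a" using \<open>Y \<le> c * b\<close> \<open>0 < a\<close> by (simp add: mult_right_mono)
  also have "\<dots> = c * a * b" by simp
  also have "\<dots> \<le> X * b" using \<open>c * a \<le> X\<close> \<open>0 \<le> b\<close> by (simp add: mult_right_mono)
  finally have "(X + Y) / (a + b) \<le> X / a"
    using \<open>0 < a\<close> \<open>0 \<le> b\<close> by (intro mediant_le_left)
  moreover have "weighted_mean m f (A \<union> B) = (X + Y) / (a + b)"
    unfolding weighted_mean_def X_def Y_def a_def b_def using fin disj by (simp add: sum.union_disjoint)
  ultimately show ?thesis by (simp add: weighted_mean_def X_def a_def)
qed

lemma weighted_mean_union_ge:
  assumes "finite A" "finite B" "A \<inter> B = {}"
    and "\<And>j. j \<in> A \<union> B \<Longrightarrow> 0 \<le> m j" "0 < (\<Sum>j\<in>B. m j)"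
    and "\<And>j. j \<in> A \<Longrightarrow> c \<le> f j" "\<And>j. j \<in> B \<Longrightarrow> f j \<le> c"
  shows "weighted_mean m f B \<le> weighted_mean m f (A \<union> B)"
  using weighted_mean_union_le[of B A m "- c" "\<lambda>j. - f j"] assms
  by (simp add: weighted_mean_uminus Un_commute Int_commute)

lemma weighted_mean_antimono_prefix_suffix:
  fixes m f :: "nat \<Rightarrow> real"
  assumes k: "lo \<le> k" "k \<le> hi" and m: "\<And>j. j \<in> {lo..hi} \<Longrightarrow> 0 < m j"
    and f: "antimono_on {lo..hi} f"
  shows "weighted_mean m f {lo..hi} \<le> weighted_mean m f {lo..k}"
    and "weighted_mean m f {k..hi} \<le> weighted_mean m f {lo..hi}"
proof -
  have f_prefix: "f k \<le> f j" if "j \<in> {lo..k}" for j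
    using that k monotone_onD[OF f] by auto
  have f_suffix: "f j \<le> f k" if "j \<in> {k..hi}" for j
    using that k monotone_onD[OF f] by auto
  have m_nonneg: "0 \<le> m j" if "j \<in> {lo..hi}" for j
    using m[OF that] by simp
  have "{lo..hi} = {lo..k} \<union> {Suc k..hi}" using k by auto
  moreover have "weighted_mean m f ({lo..k} \<union> {Suc k..hi}) \<le> weighted_mean m f {lo..k}"
    using k m m_nonneg f_prefix f_suffix by (intro weighted_mean_union_le[where c = "f k"] sum_pos) auto
  ultimately show "weighted_mean m f {lo..hi} \<le> weighted_mean m f {lo..k}" by simp
  have "{lo..hi} = {lo..<k} \<union> {k..hi}" using k by auto
  moreover have "weighted_mean m f {k..hi} \<le> weighted_mean m f ({lo..<k} \<union> {k..hi})"
    using k m m_nonneg f_prefix f_suffix by (intro weighted_mean_union_ge[where c = "f k"] sum_pos) auto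
  ultimately show "weighted_mean m f {k..hi} \<le> weighted_mean m f {lo..hi}" by simp
qed

lemma left_limit_DERIV_le_0_at_zero:
  fixes g g' :: "real \<Rightarrow> real"
  assumes cont: "isCont g t" and zero: "g t = 0"
    and ev: "\<forall>\<^sub>F s in at_left t. (g has_real_derivative g' s) (at s) \<and> 0 \<le> g s"
    and lim: "(g' \<longlongrightarrow> L) (at_left t)"
  shows "L \<le> 0"
proof (rule ccontr)
  assume "\<not> L \<le> 0"
  then have "\<forall>\<^sub>F s in at_left t. 0 < g' s"
    using lim by (intro order_tendstoD(1)) auto
  with ev have "\<forall>\<^sub>F s in at_left t. ((g has_real_derivative g' s) (at s) \<and> 0 \<le> g s) \<and> 0 < g' s"
    by (rule eventually_conj)
  then obtain b where "b < t"
    and b: "\<And>s. b < s \<Longrightarrow> s < t \<Longrightarrow> (g has_real_derivative g' s) (at s) \<and> 0 \<le> g s \<and> 0 < g' s"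
    unfolding eventually_at_left_field by auto
  define s where "s = (b + t) / 2"
  have "s < t" "b < s" using \<open>b < t\<close> by (auto simp: s_def)
  have "isCont g z" if "z \<in> {s..t}" for z
  proof (cases "z = t")
    case False
    with that \<open>b < s\<close> have "b < z" "z < t" by auto
    then show ?thesis using b DERIV_isCont by blast
  qed (use cont in simp)
  then have "continuous_on {s..t} g"
    by (intro continuous_at_imp_continuous_on) auto
  moreover have "\<exists>y. (g has_real_derivative y) (at z) \<and> 0 < y" if "s < z" "z < t" for z
    using b[of z] that \<open>b < s\<close> by auto
  ultimately have "g s < g t"
    using DERIV_pos_imp_increasing_open[OF \<open>s < t\<close>] by blast
  with b[OF \<open>b < s\<close> \<open>s < t\<close>] zero show False by simp
qed

lemma DERIV_eventually_const_at_right_eq_0: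
  fixes g :: "real \<Rightarrow> real"
  assumes deriv: "(g has_real_derivative D) (at t)" and const: "\<forall>\<^sub>F y in at_right t. g y = g t"
  shows "D = 0"
proof -
  have "((\<lambda>y. (g y - g t) / (y - t)) \<longlongrightarrow> D) (at_right t)"
    using has_field_derivative_at_within[OF deriv, of "{t<..}"]
    unfolding has_field_derivative_iff by simp
  moreover have "\<forall>\<^sub>F y in at_right t. (g y - g t) / (y - t) = 0"
    using const by eventually_elim simp
  ultimately have "((\<lambda>_. 0) \<longlongrightarrow> D) (at_right t)"
    by (rule Lim_transform_eventually)
  then show ?thesis by (simp add: tendsto_const_iff)
qed

lemma hyp_H_isCont:
  assumes H: "hyp_H \<omega> \<phi>" shows "isCont \<omega> y"
proof -
  have int: "integrable lborel \<phi>"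
    and eq: "\<And>a b. a \<le> b \<Longrightarrow> \<omega> b - \<omega> a = set_lebesgue_integral lborel {a..b} \<phi>"
    using H unfolding hyp_H_def by auto
  define a b where "a = y - 1" and "b = y + 1"
  have \<omega>_eq: "\<omega> a + integral {a..z} \<phi> = \<omega> z" if "z \<in> {a..b}" for z
  proof -
    have "set_integrable lborel {a..z} \<phi>"
      unfolding set_integrable_def using int by (intro integrable_mult_indicator) auto
    then have "set_lebesgue_integral lborel {a..z} \<phi> = integral {a..z} \<phi>"
      by (rule set_borel_integral_eq_integral(2))
    then show ?thesis using eq[of a z] that by simp
  qed
  have "\<phi> integrable_on {a..b}"
    using integrable_on_lborel[OF int] integrable_on_subinterval by blast
  then have "continuous_on {a..b} (\<lambda>z. \<omega> a + integral {a..z} \<phi>)"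
    by (intro continuous_intros indefinite_integral_continuous_1)
  then have "continuous_on {a..b} \<omega>"
    using \<omega>_eq by (rule continuous_on_eq)
  then show ?thesis
    by (rule continuous_on_interior) (auto simp: a_def b_def)
qed

lemma finite_collision_times: "finite {\<tau>. collision_time N x \<tau>}"
proof -
  define first_meetings where "first_meetings i j =
    {\<tau>. 0 < \<tau> \<and> x i \<tau> = x j \<tau> \<and> (\<forall>s\<in>{0..<\<tau>}. x i s \<noteq> x j s)}" for i j
  have "finite (first_meetings i j)" for i j
  proof -
    have "\<sigma> = \<tau>" if "\<sigma> \<in> first_meetings i j" "\<tau> \<in> first_meetings i j" for \<sigma> \<tau>
      using that by (cases \<sigma> \<tau> rule: linorder_cases) (auto simp: first_meetings_def)
    then show ?thesis
      by (metis finite.emptyI finite_insert finite_subset insertI1 subsetI equals0I)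
  qed
  moreover have "{\<tau>. collision_time N x \<tau>} \<subseteq> (\<Union>i\<in>{1..N}. \<Union>j\<in>{1..N}. first_meetings i j)"
    by (auto simp: collision_time_def first_meetings_def)
  ultimately show ?thesis by (meson finite_UN_I finite_atLeastAtMost finite_subset)
qed

lemma eventually_not_collision_time: "\<forall>\<^sub>F s in at t. \<not> collision_time N x s"
proof -
  have "\<not> t islimpt {\<tau>. collision_time N x \<tau>}"
    using finite_collision_times[of N x] by (auto simp: islimpt_eq_infinite_ball intro!: exI[of _ 1])
  then show ?thesis by (simp add: islimpt_iff_eventually)
qed

context
  fixes N :: nat and m :: "nat \<Rightarrow> real" and \<phi> :: "real \<Rightarrow> real" and x v :: "nat \<Rightarrow> real \<Rightarrow> real"
  assumes dyn: "sticky_CS N m \<phi> x v"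
begin

lemma sticky_CS_mass_pos: "j \<in> {1..N} \<Longrightarrow> 0 < m j"
  using dyn unfolding sticky_CS_def by blast

lemma sticky_CS_position_mono:
  "0 \<le> t \<Longrightarrow> i \<in> {1..N} \<Longrightarrow> j \<in> {1..N} \<Longrightarrow> i \<le> j \<Longrightarrow> x i t \<le> x j t"
  using dyn unfolding sticky_CS_def by blast

lemma sticky_CS_isCont_position:
  assumes "0 < t" "j \<in> {1..N}" shows "isCont (x j) t"
proof -
  have "continuous_on {0..} (x j)" using dyn assms(2) unfolding sticky_CS_def by blast
  then show ?thesis using assms(1) by (intro continuous_on_interior) auto
qed

lemma sticky_CS_DERIV_position:
  assumes "0 < s" "\<not> collision_time N x s" "j \<in> {1..N}"
  shows "(x j has_real_derivative v j s) (at s)" and "isCont (v j) s"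
proof -
  have "at s within {0..} = at s" using assms(1) by (intro at_within_interior) auto
  moreover have "(x j has_real_derivative v j s) (at s within {0..}) \<and>
      (v j has_real_derivative cs_force N m \<phi> x v j s) (at s within {0..})"
    using dyn assms unfolding sticky_CS_def by auto
  ultimately show "(x j has_real_derivative v j s) (at s)" "isCont (v j) s"
    by (auto intro: DERIV_isCont)
qed

lemma sticky_CS_cluster_eq_atLeastAtMost:
  assumes "0 \<le> t" "i \<in> {1..N}"
  shows "cluster N x i t = {Min (cluster N x i t)..Max (cluster N x i t)}"
proof -
  let ?J = "cluster N x i t"
  have "finite ?J" "i \<in> ?J" using assms(2) by (auto simp: cluster_def)
  then have "Min ?J \<in> ?J" "Max ?J \<in> ?J" by (auto intro: Min_in Max_in)
  then have lo: "Min ?J \<in> {1..N}" "x (Min ?J) t = x i t"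
    and hi: "Max ?J \<in> {1..N}" "x (Max ?J) t = x i t" by (auto simp: cluster_def)
  have "{Min ?J..Max ?J} \<subseteq> ?J"
  proof
    fix j assume "j \<in> {Min ?J..Max ?J}"
    then have j: "Min ?J \<le> j" "j \<le> Max ?J" by auto
    have "j \<in> {1..N}" using j lo hi by auto
    then have "x (Min ?J) t \<le> x j t" "x j t \<le> x (Max ?J) t"
      using sticky_CS_position_mono[OF assms(1) lo(1) \<open>j \<in> {1..N}\<close> j(1)]
        sticky_CS_position_mono[OF assms(1) \<open>j \<in> {1..N}\<close> hi(1) j(2)] by auto
    then show "j \<in> ?J" using \<open>j \<in> {1..N}\<close> lo hi by (auto simp: cluster_def)
  qed
  moreover have "?J \<subseteq> {Min ?J..Max ?J}"
    using \<open>finite ?J\<close> by (meson Max_ge Min_le atLeastAtMost_iff subsetI)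
  ultimately show ?thesis by (rule antisym[rotated])
qed

lemma sticky_CS_cluster_mass_pos: "i \<in> {1..N} \<Longrightarrow> 0 < (\<Sum>j\<in>cluster N x i t. m j)"
  by (intro sum_pos2[of _ i]) (auto simp: cluster_def sticky_CS_mass_pos less_imp_le)

lemma sticky_CS_velocity_tendsto_left:
  assumes "0 < t" "j \<in> {1..N}"
  shows "(v j \<longlongrightarrow> Lim (at_left t) (v j)) (at_left t)"
proof -
  have "\<exists>L. (v j \<longlongrightarrow> L) (at_left t)"
  proof (cases "collision_time N x t")
    case True
    then show ?thesis using dyn assms(2) unfolding sticky_CS_def by blast
  next
    case False
    then have "isCont (v j) t" using assms by (intro sticky_CS_DERIV_position(2))
    then have "(v j \<longlongrightarrow> v j t) (at_left t)" by (simp add: isCont_def filterlim_at_split)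
    then show ?thesis by blast
  qed
  then show ?thesis by (metis tendsto_Lim trivial_limit_at_left_real)
qed

lemma sticky_CS_left_velocity_antimono:
  assumes t: "0 < t" and j: "j \<in> {1..N}" "j' \<in> {1..N}" "j \<le> j'" and meet: "x j t = x j' t"
  shows "Lim (at_left t) (v j') \<le> Lim (at_left t) (v j)"
proof -
  let ?g = "\<lambda>s. x j' s - x j s"
  have "\<forall>\<^sub>F s in at_left t. \<not> collision_time N x s"
    using eventually_not_collision_time[of N x t] by (simp add: eventually_at_split)
  with eventually_at_left_real[OF t]
  have "\<forall>\<^sub>F s in at_left t. (?g has_real_derivative v j' s - v j s) (at s) \<and> 0 \<le> ?g s"
  proof eventually_elim
    case (elim s)
    then have "0 < s" "\<not> collision_time N x s" by auto
    then have "(x j' has_real_derivative v j' s) (at s)" "(x j has_real_derivative v j s) (at s)"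
      using j by (simp_all add: sticky_CS_DERIV_position(1))
    moreover have "x j s \<le> x j' s" using \<open>0 < s\<close> j by (intro sticky_CS_position_mono) auto
    ultimately show ?case by (auto intro: DERIV_diff)
  qed
  moreover have "isCont ?g t"
    using sticky_CS_isCont_position[OF t] j by (intro continuous_intros) auto
  moreover have "?g t = 0" using meet by simp
  moreover have "((\<lambda>s. v j' s - v j s) \<longlongrightarrow> Lim (at_left t) (v j') - Lim (at_left t) (v j)) (at_left t)"
    using sticky_CS_velocity_tendsto_left[OF t] j by (intro tendsto_diff) auto
  ultimately have "Lim (at_left t) (v j') - Lim (at_left t) (v j) \<le> 0"
    by (intro left_limit_DERIV_le_0_at_zero)
  then show ?thesis by simp
qed

lemma sticky_CS_velocity_eq_in_cluster:
  assumes "0 < t" "\<not> collision_time N x t" "i \<in> {1..N}" "j \<in> cluster N x i t"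
  shows "v j t = v i t"
proof -
  have "j \<in> {1..N}" using assms(4) by (simp add: cluster_def)
  then have "(x j has_real_derivative v j t) (at t)" "(x i has_real_derivative v i t) (at t)"
    using assms(1-3) by (simp_all add: sticky_CS_DERIV_position(1))
  then have "((\<lambda>s. x j s - x i s) has_real_derivative v j t - v i t) (at t)"
    by (rule DERIV_diff)
  moreover have "\<forall>\<^sub>F s in at_right t. x j s - x i s = x j t - x i t"
  proof (rule eventually_mono[OF eventually_at_right_less])
    fix s assume "t < s"
    then have "cluster N x i t \<subseteq> cluster N x i s"
      using dyn assms(1,3) unfolding sticky_CS_def by auto
    then show "x j s - x i s = x j t - x i t" using assms(4) by (auto simp: cluster_def)
  qed
  ultimately have "v j t - v i t = 0" by (rule DERIV_eventually_const_at_right_eq_0)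
  then show ?thesis by simp
qed

lemma sticky_CS_velocity_tendsto_right:
  assumes t: "0 < t" and i: "i \<in> {1..N}"
  shows "(v i \<longlongrightarrow> weighted_mean m (\<lambda>j. Lim (at_left t) (v j)) (cluster N x i t)) (at_right t)"
proof (cases "collision_time N x t")
  case True
  then show ?thesis using dyn i unfolding sticky_CS_def weighted_mean_def by blast
next
  case False
  have "Lim (at_left t) (v j) = v i t" if "j \<in> cluster N x i t" for j
  proof -
    have "j \<in> {1..N}" using that by (simp add: cluster_def)
    then have "isCont (v j) t" using t False by (intro sticky_CS_DERIV_position(2))
    then have "(v j \<longlongrightarrow> v j t) (at_left t)" by (simp add: isCont_def filterlim_at_split)
    then have "Lim (at_left t) (v j) = v j t" by (intro tendsto_Lim) simp_all
    then show ?thesis using sticky_CS_velocity_eq_in_cluster[OF t False i that] by simp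
  qed
  then have "weighted_mean m (\<lambda>j. Lim (at_left t) (v j)) (cluster N x i t)
      = weighted_mean m (\<lambda>_. v i t) (cluster N x i t)"
    by (rule weighted_mean_cong)
  also have "\<dots> = v i t"
    using sticky_CS_cluster_mass_pos[OF i, of t] by (intro weighted_mean_const) simp
  finally have "weighted_mean m (\<lambda>j. Lim (at_left t) (v j)) (cluster N x i t) = v i t" .
  moreover have "isCont (v i) t" using t False i by (intro sticky_CS_DERIV_position(2))
  ultimately show ?thesis by (simp add: isCont_def filterlim_at_split)
qed

lemma sticky_CS_isCont_interaction:
  assumes \<omega>: "\<And>y. isCont \<omega> y" and t: "0 < t" and j: "j \<in> {1..N}"
  shows "isCont (\<lambda>s. \<Sum>l=1..N. m l * \<omega> (x j s - x l s)) t"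
proof -
  have "isCont (\<lambda>s. \<omega> (x j s - x l s)) t" if "l \<in> {1..N}" for l
    using sticky_CS_isCont_position[OF t] j that
    by (intro isCont_o2[where g = \<omega>, OF _ \<omega>] continuous_intros) auto
  then show ?thesis by (intro continuous_intros) auto
qed

lemma sticky_CS_psi_tendsto_left:
  assumes \<omega>: "\<And>y. isCont \<omega> y" and t: "0 < t" and i: "i \<in> {1..N}" and j: "j \<in> cluster N x i t"
  shows "(psi N m \<omega> x v j \<longlongrightarrow> Lim (at_left t) (v j) + (\<Sum>l=1..N. m l * \<omega> (x i t - x l t)))
    (at_left t)"
proof -
  have "j \<in> {1..N}" and meet: "x j t = x i t" using j by (auto simp: cluster_def)
  then have "((\<lambda>s. \<Sum>l=1..N. m l * \<omega> (x j s - x l s)) \<longlongrightarrow> (\<Sum>l=1..N. m l * \<omega> (x i t - x l t)))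
      (at_left t)"
    unfolding meet[symmetric] using sticky_CS_isCont_interaction[OF \<omega> t]
    by (simp add: isCont_def filterlim_at_split)
  with sticky_CS_velocity_tendsto_left[OF t \<open>j \<in> {1..N}\<close>] show ?thesis
    unfolding psi_def by (rule tendsto_add)
qed

lemma sticky_CS_psi_tendsto_right:
  assumes \<omega>: "\<And>y. isCont \<omega> y" and t: "0 < t" and i: "i \<in> {1..N}"
  shows "(psi N m \<omega> x v i \<longlongrightarrow> weighted_mean m (\<lambda>j. Lim (at_left t) (v j)) (cluster N x i t)
      + (\<Sum>l=1..N. m l * \<omega> (x i t - x l t))) (at_right t)"
proof -
  have "((\<lambda>s. \<Sum>l=1..N. m l * \<omega> (x i s - x l s)) \<longlongrightarrow> (\<Sum>l=1..N. m l * \<omega> (x i t - x l t)))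
      (at_right t)"
    using sticky_CS_isCont_interaction[OF \<omega> t i] by (simp add: isCont_def filterlim_at_split)
  with sticky_CS_velocity_tendsto_right[OF t i] show ?thesis
    unfolding psi_def by (rule tendsto_add)
qed

lemma sticky_CS_psi_left_limit:
  assumes "\<And>y. isCont \<omega> y" "0 < t" "i \<in> {1..N}" "j \<in> cluster N x i t"
  shows "Lim (at_left t) (psi N m \<omega> x v j)
    = Lim (at_left t) (v j) + (\<Sum>l=1..N. m l * \<omega> (x i t - x l t))"
  using sticky_CS_psi_tendsto_left[OF assms] by (intro tendsto_Lim) simp_all

lemma sticky_CS_psi_left_limit_antimono:
  assumes \<omega>: "\<And>y. isCont \<omega> y" and t: "0 < t" and i: "i \<in> {1..N}"
    and ab: "a \<in> cluster N x i t" "b \<in> cluster N x i t" "a \<le> b"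
  shows "Lim (at_left t) (psi N m \<omega> x v b) \<le> Lim (at_left t) (psi N m \<omega> x v a)"
proof -
  have "Lim (at_left t) (v b) \<le> Lim (at_left t) (v a)"
    using ab by (intro sticky_CS_left_velocity_antimono[OF t]) (auto simp: cluster_def)
  then show ?thesis using sticky_CS_psi_left_limit[OF \<omega> t i] ab by simp
qed

lemma sticky_CS_psi_right_limit_eq_mean:
  assumes \<omega>: "\<And>y. isCont \<omega> y" and t: "0 < t" and i: "i \<in> {1..N}"
  shows "Lim (at_right t) (psi N m \<omega> x v i)
    = weighted_mean m (\<lambda>j. Lim (at_left t) (psi N m \<omega> x v j)) (cluster N x i t)"
proof -
  let ?W = "\<Sum>l=1..N. m l * \<omega> (x i t - x l t)"
  have "weighted_mean m (\<lambda>j. Lim (at_left t) (psi N m \<omega> x v j)) (cluster N x i t)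
      = weighted_mean m (\<lambda>j. Lim (at_left t) (v j) + ?W) (cluster N x i t)"
    using sticky_CS_psi_left_limit[OF \<omega> t i] by (rule weighted_mean_cong)
  also have "\<dots> = weighted_mean m (\<lambda>j. Lim (at_left t) (v j)) (cluster N x i t) + ?W"
    using sticky_CS_cluster_mass_pos[OF i, of t] by (intro weighted_mean_add_const) simp
  also have "\<dots> = Lim (at_right t) (psi N m \<omega> x v i)"
    using sticky_CS_psi_tendsto_right[OF \<omega> t i] by (intro tendsto_Lim[symmetric]) simp_all
  finally show ?thesis by (rule sym)
qed

end

theorem lemma2p3:
  fixes N :: nat and m :: "nat \<Rightarrow> real" and \<omega> \<phi> :: "real \<Rightarrow> real"
    and x v :: "nat \<Rightarrow> real \<Rightarrow> real" and i k :: nat and t :: real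
  assumes H: "hyp_H \<omega> \<phi>"
    and dyn: "sticky_CS N m \<phi> x v"
    and i: "i \<in> {1..N}" and t: "0 < t"
    and k: "k \<in> cluster N x i t"
  shows "(let J = cluster N x i t; lo = Min J; hi = Max J;
             P = (\<lambda>j. Lim (at_left t) (psi N m \<omega> x v j))
          in (\<Sum>j=lo..k. m j * P j) / (\<Sum>j=lo..k. m j)
               \<ge> (\<Sum>j\<in>J. m j * P j) / (\<Sum>j\<in>J. m j)
           \<and> (\<Sum>j\<in>J. m j * P j) / (\<Sum>j\<in>J. m j) = Lim (at_right t) (psi N m \<omega> x v i)
           \<and> Lim (at_right t) (psi N m \<omega> x v i)
               \<ge> (\<Sum>j=k..hi. m j * P j) / (\<Sum>j=k..hi. m j))"
proof -
  define J lo hi where "J = cluster N x i t" and "lo = Min J" and "hi = Max J"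
  define P where "P = (\<lambda>j. Lim (at_left t) (psi N m \<omega> x v j))"
  have \<omega>: "\<And>y. isCont \<omega> y" using H by (rule hyp_H_isCont)
  have J_eq: "J = {lo..hi}"
    using sticky_CS_cluster_eq_atLeastAtMost[OF dyn _ i] t by (simp add: J_def lo_def hi_def)
  have "lo \<le> k" "k \<le> hi" using k J_eq by (auto simp: J_def)
  moreover have "0 < m j" if "j \<in> {lo..hi}" for j
    using that sticky_CS_mass_pos[OF dyn] unfolding J_eq[symmetric] J_def cluster_def by auto
  moreover have "antimono_on {lo..hi} P"
    using sticky_CS_psi_left_limit_antimono[OF dyn \<omega> t i] unfolding J_eq[symmetric] J_def P_def
    by (intro monotone_onI) auto
  ultimately have "weighted_mean m P J \<le> weighted_mean m P {lo..k}"
    and "weighted_mean m P {k..hi} \<le> weighted_mean m P J"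
    unfolding J_eq by (blast intro: weighted_mean_antimono_prefix_suffix)+
  moreover have "weighted_mean m P J = Lim (at_right t) (psi N m \<omega> x v i)"
    using sticky_CS_psi_right_limit_eq_mean[OF dyn \<omega> t i] by (simp add: J_def P_def)
  ultimately show ?thesis
    unfolding Let_def weighted_mean_def J_def[symmetric] lo_def[symmetric] hi_def[symmetric]
      P_def[symmetric] by simp
qed

end
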